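(* Let $\Omega\subset\mathbb{C}^n$ be a bounded domain, and let $\Psi,\Psi'$ be elementary local indicators on $\mathbb{D}^n$ such that $\Psi\le\Psi'+C$ for some constant $C$, and $\tau':=\tau_{\Psi'}>0$. Let $A\subset\mathbb{D}$, $a\in\Omega$ and $\varphi\in Hol(\mathbb{D},\Omega)$ satisfy $\sum_{\alpha\in A}m_{\varphi,a,\Psi'}(\alpha)\le\tau'$. Then $\sum_{\alpha\in A}m_{\varphi,a,\Psi}(\alpha)\le\tau:=\tau_\Psi$.
   Context: $\mathbb{D}$ is the unit disk; $z\cdot\bar w=\sum_jz_j\bar w_j$. An elementary local indicator is $\Psi(z)=\max_{1\le j\le n}m_j\log|z\cdot\bar v_j|$ on $\mathbb{D}^n$, with $\{v_j\}$ a basis of $\mathbb{C}^n$ and $m_j\in\mathbb{R}_+$; its Monge–Ampère mass at $0$ is $\tau_\Psi=m_1\cdots m_n$. Multiplicity: if $\varphi(\alpha)=a$, $m_{\varphi,a,\Psi}(\alpha)=\min\big(\tau_\Psi,\liminf_{\zeta\to0}\Psi(\varphi(\alpha+\zeta)-a)/\log|\zeta|\big)$; otherwise $m_{\varphi,a,\Psi}(\alpha)=0$. *)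

theory Defs
  imports "HOL-Analysis.Analysis" "HOL-Library.Extended_Real"
begin

definition logabs :: "complex \<Rightarrow> ereal" where
  "logabs w = (if w = 0 then -\<infinity> else ereal (ln (cmod w)))"

definition hdot :: "complex^'n \<Rightarrow> complex^'n \<Rightarrow> complex" where
  "hdot z w = (\<Sum>j\<in>UNIV. z $ j * cnj (w $ j))"

definition polydisc :: "(complex^'n) set" where
  "polydisc = {z. \<forall>i. cmod (z $ i) < 1}"

text \<open>Data of an elementary local indicator: v is a (complex) basis of C^n indexed by the
  n coordinates, and the weights m_j are positive reals.\<close>
definition eli_data :: "('n \<Rightarrow> complex^'n) \<Rightarrow> ('n \<Rightarrow> real) \<Rightarrow> bool" where
  "eli_data v m \<longleftrightarrow>
     (\<forall>c::'n \<Rightarrow> complex. (\<Sum>j\<in>UNIV. c j *s v j) = 0 \<longrightarrow> (\<forall>j. c j = 0)) \<and>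
     (\<forall>j. m j > 0)"

definition eli :: "('n::finite \<Rightarrow> complex^'n) \<Rightarrow> ('n \<Rightarrow> real) \<Rightarrow> complex^'n \<Rightarrow> ereal" where
  "eli v m z = Max ((\<lambda>j. ereal (m j) * logabs (hdot z (v j))) ` UNIV)"

text \<open>Monge--Ampere mass at 0: tau = m_1 ... m_n.\<close>
definition eli_tau :: "('n::finite \<Rightarrow> real) \<Rightarrow> real" where
  "eli_tau m = (\<Prod>j\<in>UNIV. m j)"

definition mult :: "(complex \<Rightarrow> complex^'n) \<Rightarrow> complex^'n \<Rightarrow> ('n::finite \<Rightarrow> complex^'n)
    \<Rightarrow> ('n \<Rightarrow> real) \<Rightarrow> complex \<Rightarrow> ereal" where
  "mult \<phi> a v m \<alpha> =
     (if \<phi> \<alpha> = a then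
        min (ereal (eli_tau m))
            (Liminf (at 0) (\<lambda>\<zeta>. eli v m (\<phi> (\<alpha> + \<zeta>) - a) / ereal (ln (cmod \<zeta>))))
      else 0)"

end

theory Submission
  imports Defs
begin

(* Put R = tau/tau'. The heart of the proof is the estimate R Psi' <= Psi + c near 0.
   In the coordinates u_j = z . conj(v'_j) and g_i = z . conj(v_i) one has g = B u for an
   invertible transition matrix B. Testing Psi <= Psi' + C at the points z with u = t e_j,
   t -> 0, shows that B_ij <> 0 forces m'_j <= m_i. Hence along every permutation p
   contributing to Cramer's formula for u_j, the row i with p(i) = j has m_i tau' <= m'_j tau,
   so |g_i| <= exp(Psi(z)/m_i) <= exp(Psi(z)/(R m'_j)), and Cramer's rule bounds |u_j| by a
   constant times exp(Psi(z)/(R m'_j)). Dividing R Psi' <= Psi + c by log|zeta| < 0 and passing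
   to the liminf gives m_{phi,a,Psi}(alpha) <= R m_{phi,a,Psi'}(alpha) for every alpha; summing
   over A gives the claim. *)

definition coord_matrix :: "('n::finite \<Rightarrow> complex^'n) \<Rightarrow> complex^'n^'n" where
  "coord_matrix v = (\<chi> j k. cnj (v j $ k))"

lemma hdot_eq_coord_matrix: "hdot z (v j) = (coord_matrix v *v z) $ j"
  by (simp add: hdot_def coord_matrix_def matrix_vector_mult_def mult.commute)

lemma invertible_iff_trivial_kernel:
  fixes A :: "'a::field^'n^'n"
  shows "invertible A \<longleftrightarrow> (\<forall>x. A *v x = 0 \<longrightarrow> x = 0)"
  by (simp add: invertible_left_inverse matrix_left_invertible_ker)

lemma invertible_coord_matrix:
  fixes v :: "'n::finite \<Rightarrow> complex^'n"
  assumes "eli_data v m"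
  shows "invertible (coord_matrix v)"
proof -
  define V :: "complex^'n^'n" where "V = (\<chi> k j. v j $ k)"
  have "c = 0" if "V *v c = 0" for c
  proof -
    have "(\<Sum>j\<in>UNIV. c $ j *s v j) = V *v c"
      by (simp add: vec_eq_iff V_def matrix_vector_mult_def mult.commute)
    with that assms have "\<forall>j. c $ j = 0" unfolding eli_data_def by metis
    then show "c = 0" by (simp add: vec_eq_iff)
  qed
  then have "invertible V" by (simp add: invertible_iff_trivial_kernel)
  then have inv_VT: "invertible (transpose V)" by (simp add: invertible_det_nz)
  have "z = 0" if "coord_matrix v *v z = 0" for z
  proof -
    have "transpose V *v (\<chi> k. cnj (z $ k)) = (\<chi> i. cnj ((coord_matrix v *v z) $ i))"
      by (simp add: vec_eq_iff V_def transpose_def coord_matrix_def matrix_vector_mult_def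
          mult.commute)
    with that have "transpose V *v (\<chi> k. cnj (z $ k)) = 0"
      by (simp add: vec_eq_iff)
    then have "(\<chi> k. cnj (z $ k)) = 0"
      using inv_VT by (simp add: invertible_iff_trivial_kernel)
    then show "z = 0" by (simp add: vec_eq_iff)
  qed
  then show ?thesis by (simp add: invertible_iff_trivial_kernel)
qed

lemma eli_data_weight_pos: "eli_data v m \<Longrightarrow> m j > 0"
  by (simp add: eli_data_def)

lemma eli_tau_pos: "eli_data v m \<Longrightarrow> eli_tau m > 0"
  unfolding eli_tau_def by (auto intro: prod_pos eli_data_weight_pos)

lemma eli_tau_ratio_pos: "eli_data v m \<Longrightarrow> eli_data v' m' \<Longrightarrow> eli_tau m / eli_tau m' > 0"
  using eli_tau_pos by (metis divide_pos_pos)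

lemma eli_ge_term: "ereal (m j) * logabs (hdot z (v j)) \<le> eli v m z"
  unfolding eli_def by (rule Max_ge) auto

lemma eli_attained: "\<exists>j. eli v m z = ereal (m j) * logabs (hdot z (v j))"
proof -
  have "eli v m z \<in> range (\<lambda>j. ereal (m j) * logabs (hdot z (v j)))"
    unfolding eli_def by (rule Max_in) auto
  then show ?thesis by blast
qed

lemma eli_nonpos:
  assumes "eli_data v m" and "\<forall>i. cmod (hdot z (v i)) \<le> 1"
  shows "eli v m z \<le> 0"
proof -
  obtain j where "eli v m z = ereal (m j) * logabs (hdot z (v j))"
    using eli_attained by blast
  moreover have "logabs (hdot z (v j)) \<le> 0"
    using assms(2) by (auto simp: logabs_def)
  ultimately show ?thesis
    using eli_data_weight_pos[OF assms(1), of j] by (simp add: ereal_mult_le_0_iff)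
qed

lemma eli_eq_minf_iff:
  fixes v :: "'n::finite \<Rightarrow> complex^'n"
  assumes "eli_data v m"
  shows "eli v m z = -\<infinity> \<longleftrightarrow> z = 0"
proof -
  have term_minf: "ereal (m j) * logabs w = -\<infinity> \<longleftrightarrow> w = 0" for j w
    using eli_data_weight_pos[OF assms, of j] by (simp add: logabs_def)
  have "eli v m z = -\<infinity> \<longleftrightarrow> (\<forall>j. hdot z (v j) = 0)"
  proof
    assume "eli v m z = -\<infinity>"
    then show "\<forall>j. hdot z (v j) = 0"
      using eli_ge_term[of m _ z v] term_minf by simp
  next
    assume "\<forall>j. hdot z (v j) = 0"
    then show "eli v m z = -\<infinity>"
      using eli_attained[of v m z] term_minf by auto
  qed
  also have "\<dots> \<longleftrightarrow> coord_matrix v *v z = 0"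
    by (simp add: vec_eq_iff hdot_eq_coord_matrix)
  also have "\<dots> \<longleftrightarrow> z = 0"
    using invertible_coord_matrix[OF assms] by (auto simp: invertible_iff_trivial_kernel)
  finally show ?thesis .
qed

lemma norm_hdot_le_exp_eli:
  assumes "eli_data v m" and "eli v m z = ereal h"
  shows "cmod (hdot z (v i)) \<le> exp (h / m i)"
proof (cases "hdot z (v i) = 0")
  case False
  have "ereal (m i * ln (cmod (hdot z (v i)))) \<le> ereal h"
    using eli_ge_term[of m i z v] assms(2) False by (simp add: logabs_def)
  then have "ln (cmod (hdot z (v i))) \<le> h / m i"
    using eli_data_weight_pos[OF assms(1), of i] by (simp add: field_simps)
  then have "exp (ln (cmod (hdot z (v i)))) \<le> exp (h / m i)"
    by simp
  then show ?thesis
    using False by simp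
qed simp

lemma nonneg_if_mult_ln_bounded_above:
  fixes d K t0 :: real
  assumes "t0 > 0" and "\<And>t. 0 < t \<Longrightarrow> t < t0 \<Longrightarrow> d * ln t \<le> K"
  shows "d \<ge> 0"
proof (rule ccontr)
  assume "\<not> d \<ge> 0"
  define X where "X = max (1 - ln t0) (K / - d + 1)"
  have "- X < ln t0" by (simp add: X_def)
  then have "exp (- X) < t0"
    using assms(1) by (metis exp_less_cancel_iff exp_ln)
  then have "d * - X \<le> K"
    using assms(2)[of "exp (- X)"] by simp
  then have "X \<le> K / - d"
    using \<open>\<not> d \<ge> 0\<close> by (simp add: field_simps)
  then show False by (simp add: X_def)
qed

lemma matrix_vector_mult_axis: "((A::'a::comm_semiring_1^'n^'m) *v axis j 1) $ i = A $ i $ j"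
  by (simp add: matrix_vector_mult_def axis_def if_distrib cong: if_cong)

lemma weight_le_if_transition_entry_nonzero:
  fixes v v' :: "'n::finite \<Rightarrow> complex^'n"
  assumes ed': "eli_data v' m'"
    and le: "\<forall>z\<in>polydisc. eli v m z \<le> eli v' m' z + ereal C"
    and inverse: "coord_matrix v' ** Q = mat 1"
    and nonzero: "(coord_matrix v ** Q) $ i $ j \<noteq> 0"
  shows "m' j \<le> m i"
proof -
  define c where "c = Q *v axis j 1"
  define b where "b = cmod ((coord_matrix v ** Q) $ i $ j)"
  define t0 where "t0 = 1 / (norm c + 1)"
  have t0_denom_pos: "norm c + 1 > 0" by (simp add: add_nonneg_pos)
  have "(m i - m' j) * ln t \<le> C - m i * ln b" if t: "0 < t" "t < t0" for t
  proof -
    define z where "z = complex_of_real t *s c"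
    have "z \<in> polydisc"
      unfolding polydisc_def
    proof safe
      fix k
      have "cmod (z $ k) = t * cmod (c $ k)" using t by (simp add: z_def norm_mult)
      also have "\<dots> \<le> t * norm c" using t by (simp add: mult_left_mono Finite_Cartesian_Product.norm_nth_le)
      also have "\<dots> < t0 * (norm c + 1)" using t by (intro mult_strict_mono) auto
      also have "\<dots> = 1" using t0_denom_pos by (simp add: t0_def)
      finally show "cmod (z $ k) < 1" .
    qed
    have dual: "hdot z (v' l) = (if l = j then complex_of_real t else 0)" for l
      by (simp add: hdot_eq_coord_matrix z_def c_def vector_scalar_commute matrix_vector_mul_assoc
          inverse axis_def)
    have Psi'_z: "eli v' m' z \<le> ereal (m' j * ln t)"
    proof -
      obtain l where "eli v' m' z = ereal (m' l) * logabs (hdot z (v' l))"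
        using eli_attained by blast
      then show ?thesis
        using t eli_data_weight_pos[OF ed', of l] by (cases "l = j") (auto simp: dual logabs_def)
    qed
    have "hdot z (v i) = complex_of_real t * (coord_matrix v ** Q) $ i $ j"
      by (simp add: hdot_eq_coord_matrix z_def c_def vector_scalar_commute matrix_vector_mul_assoc
          matrix_vector_mult_axis)
    then have "ereal (m i * ln (t * b)) \<le> eli v m z"
      using eli_ge_term[of m i z v] t nonzero by (simp add: logabs_def b_def norm_mult)
    also have "\<dots> \<le> eli v' m' z + ereal C"
      using le \<open>z \<in> polydisc\<close> by blast
    also have "\<dots> \<le> ereal (m' j * ln t) + ereal C"
      using Psi'_z by (rule add_right_mono)
    finally have "m i * ln (t * b) \<le> m' j * ln t + C"
      by simp
    then show ?thesis
      using t nonzero by (simp add: ln_mult b_def algebra_simps)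
  qed
  moreover have "t0 > 0" using t0_denom_pos by (simp add: t0_def)
  ultimately have "m i - m' j \<ge> 0"
    using nonneg_if_mult_ln_bounded_above by blast
  then show ?thesis by simp
qed

lemma weight_ratio_le_by_permutation:
  fixes m m' :: "'n::finite \<Rightarrow> real"
  assumes p: "p permutes UNIV" and m_pos: "\<And>l. m l > 0" and m'_pos: "\<And>l. m' l > 0"
    and le: "\<And>l. l \<noteq> i \<Longrightarrow> m' (p l) \<le> m l"
  shows "m i * eli_tau m' \<le> m' (p i) * eli_tau m"
proof -
  have "eli_tau m' = (\<Prod>l\<in>UNIV. m' (p l))"
    unfolding eli_tau_def using prod.permute[OF p, of m'] by (simp add: o_def)
  also have "\<dots> = m' (p i) * (\<Prod>l\<in>UNIV - {i}. m' (p l))"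
    by (simp add: prod.remove[of UNIV i])
  finally have tau': "eli_tau m' = m' (p i) * (\<Prod>l\<in>UNIV - {i}. m' (p l))" .
  have tau: "eli_tau m = m i * (\<Prod>l\<in>UNIV - {i}. m l)"
    unfolding eli_tau_def by (simp add: prod.remove[of UNIV i])
  have "(\<Prod>l\<in>UNIV - {i}. m' (p l)) \<le> (\<Prod>l\<in>UNIV - {i}. m l)"
    by (rule prod_mono) (use le m'_pos less_imp_le in blast)
  then have "m i * m' (p i) * (\<Prod>l\<in>UNIV - {i}. m' (p l)) \<le> m i * m' (p i) * (\<Prod>l\<in>UNIV - {i}. m l)"
    using m_pos[of i] m'_pos[of "p i"] by (intro mult_left_mono) auto
  then show ?thesis by (simp add: tau tau' mult_ac)
qed

definition cramer_const :: "'a::real_normed_field^'n^'n \<Rightarrow> 'n \<Rightarrow> real" where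
  "cramer_const B j =
     (\<Sum>p | p permutes (UNIV::'n set). \<Prod>l\<in>UNIV - {inv p j}. norm (B $ l $ p l)) / norm (det B)"

lemma norm_cramer_le:
  fixes B :: "'a::real_normed_field^'n::finite^'n"
  assumes det: "det B \<noteq> 0" and "B *v u = g"
    and bound: "\<And>p. p permutes UNIV \<Longrightarrow> (\<And>l. l \<noteq> inv p j \<Longrightarrow> B $ l $ p l \<noteq> 0)
                  \<Longrightarrow> norm (g $ inv p j) \<le> E"
  shows "norm (u $ j) \<le> E * cramer_const B j"
proof -
  define M where "M = (\<chi> l k. if k = j then g $ l else B $ l $ k)"
  have u_j: "u $ j = det M / det B"
    using cramer[OF det] assms(2) by (simp add: M_def)
  have diagonal_term:
    "norm (\<Prod>l\<in>UNIV. M $ l $ p l) \<le> E * (\<Prod>l\<in>UNIV - {inv p j}. norm (B $ l $ p l))"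
    if p: "p permutes UNIV" for p
  proof -
    define i where "i = inv p j"
    define P where "P = (\<Prod>l\<in>UNIV - {i}. norm (B $ l $ p l))"
    have p_iff: "p l = j \<longleftrightarrow> l = i" for l
      using permutes_inv_eq[OF p, of j l] by (auto simp: i_def)
    have "(\<Prod>l\<in>UNIV. M $ l $ p l) = M $ i $ p i * (\<Prod>l\<in>UNIV - {i}. M $ l $ p l)"
      by (simp add: prod.remove[of UNIV i])
    also have "\<dots> = g $ i * (\<Prod>l\<in>UNIV - {i}. B $ l $ p l)"
      using p_iff by (simp add: M_def)
    finally have "norm (\<Prod>l\<in>UNIV. M $ l $ p l) = norm (g $ i) * P"
      by (simp add: P_def norm_mult prod_norm)
    also have "\<dots> \<le> E * P"
    proof (cases "P = 0")
      case False
      then have "norm (g $ i) \<le> E"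
        using bound[OF p] by (simp add: P_def i_def)
      then show ?thesis by (simp add: P_def mult_right_mono prod_nonneg)
    qed simp
    finally show ?thesis by (simp add: P_def i_def)
  qed
  have abs_sign: "\<bar>real_of_int (sign p)\<bar> = 1" for p :: "'n \<Rightarrow> 'n"
    by (simp add: sign_def)
  have "norm (det M) \<le> (\<Sum>p | p permutes (UNIV::'n set). norm (\<Prod>l\<in>UNIV. M $ l $ p l))"
    unfolding det_def by (rule order_trans[OF norm_sum]) (simp add: norm_mult abs_sign)
  also have "\<dots> \<le> (\<Sum>p | p permutes (UNIV::'n set). E * (\<Prod>l\<in>UNIV - {inv p j}. norm (B $ l $ p l)))"
    by (rule sum_mono) (simp add: diagonal_term)
  also have "\<dots> = E * cramer_const B j * norm (det B)"
    using det by (simp add: cramer_const_def sum_distrib_left)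
  finally show ?thesis
    using det by (simp add: u_j norm_divide divide_le_eq)
qed

lemma weight_le_ratio_if_transition_diagonal_nonzero:
  fixes v v' :: "'n::finite \<Rightarrow> complex^'n"
  assumes ed: "eli_data v m" and ed': "eli_data v' m'"
    and le: "\<forall>z\<in>polydisc. eli v m z \<le> eli v' m' z + ereal C"
    and inverse: "coord_matrix v' ** Q = mat 1"
    and p: "p permutes UNIV" and nonzero: "\<And>l. l \<noteq> i \<Longrightarrow> (coord_matrix v ** Q) $ l $ p l \<noteq> 0"
  shows "m i \<le> eli_tau m / eli_tau m' * m' (p i)"
proof -
  have "m i * eli_tau m' \<le> m' (p i) * eli_tau m"
    using p eli_data_weight_pos[OF ed] eli_data_weight_pos[OF ed']
  proof (rule weight_ratio_le_by_permutation)
    show "m' (p l) \<le> m l" if "l \<noteq> i" for l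
      using weight_le_if_transition_entry_nonzero[OF ed' le inverse nonzero[OF that]] .
  qed
  then show ?thesis
    using eli_tau_pos[OF ed'] by (simp add: field_simps)
qed

lemma norm_hdot_le_cramer_bound:
  fixes v v' :: "'n::finite \<Rightarrow> complex^'n"
  assumes ed: "eli_data v m" and ed': "eli_data v' m'"
    and le: "\<forall>z\<in>polydisc. eli v m z \<le> eli v' m' z + ereal C"
    and Q: "coord_matrix v' ** Q = mat 1" "Q ** coord_matrix v' = mat 1"
    and h: "eli v m z = ereal h" "h \<le> 0"
  shows "cmod (hdot z (v' j))
           \<le> exp (h / (eli_tau m / eli_tau m' * m' j)) * cramer_const (coord_matrix v ** Q) j"
proof -
  define R where "R = eli_tau m / eli_tau m'"
  have R_pos: "R > 0"
    unfolding R_def using ed ed' by (rule eli_tau_ratio_pos)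
  define B where "B = coord_matrix v ** Q"
  have det_B: "det B \<noteq> 0"
    using invertible_mult[OF invertible_coord_matrix[OF ed], of Q] Q
    by (auto simp: B_def invertible_def invertible_det_nz[symmetric])
  have transition: "B *v (coord_matrix v' *v z) = coord_matrix v *v z"
    by (simp add: B_def matrix_vector_mul_assoc Q(2) flip: matrix_mul_assoc)
  have "cmod ((coord_matrix v' *v z) $ j) \<le> exp (h / (R * m' j)) * cramer_const B j"
  proof (rule norm_cramer_le[OF det_B transition])
    fix p assume p: "p permutes UNIV" and "\<And>l. l \<noteq> inv p j \<Longrightarrow> B $ l $ p l \<noteq> 0"
    then have "m (inv p j) \<le> R * m' j"
      using weight_le_ratio_if_transition_diagonal_nonzero[OF ed ed' le Q(1) p] permutes_inverses(1)[OF p]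
      unfolding B_def R_def by metis
    then have "h / m (inv p j) \<le> h / (R * m' j)"
      using h(2) R_pos eli_data_weight_pos[OF ed', of j] eli_data_weight_pos[OF ed, of "inv p j"]
      by (intro divide_left_mono_neg) auto
    then show "cmod ((coord_matrix v *v z) $ inv p j) \<le> exp (h / (R * m' j))"
      using norm_hdot_le_exp_eli[OF ed h(1), of "inv p j"]
      by (simp add: hdot_eq_coord_matrix order_trans)
  qed
  then show ?thesis
    by (simp add: hdot_eq_coord_matrix R_def B_def)
qed

lemma eli_lower_bound:
  fixes v v' :: "'n::finite \<Rightarrow> complex^'n"
  assumes ed: "eli_data v m" and ed': "eli_data v' m'"
    and le: "\<forall>z\<in>polydisc. eli v m z \<le> eli v' m' z + ereal C"
  shows "\<exists>c. \<forall>z. (\<forall>i. cmod (hdot z (v i)) \<le> 1) \<longrightarrow>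
           ereal (eli_tau m / eli_tau m') * eli v' m' z \<le> eli v m z + ereal c"
proof -
  define R where "R = eli_tau m / eli_tau m'"
  have R_pos: "R > 0"
    unfolding R_def using ed ed' by (rule eli_tau_ratio_pos)
  obtain Q where Q: "coord_matrix v' ** Q = mat 1" "Q ** coord_matrix v' = mat 1"
    using invertible_coord_matrix[OF ed'] unfolding invertible_def by blast
  define K where "K = cramer_const (coord_matrix v ** Q)"
  define c where "c = (\<Sum>j\<in>UNIV. \<bar>R * m' j * ln (K j)\<bar>)"
  have "ereal R * eli v' m' z \<le> eli v m z + ereal c"
    if small: "\<forall>i. cmod (hdot z (v i)) \<le> 1" for z
  proof -
    obtain j where j: "eli v' m' z = ereal (m' j) * logabs (hdot z (v' j))"
      using eli_attained by blast
    have m'_j: "m' j > 0" by (rule eli_data_weight_pos[OF ed'])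
    show ?thesis
    proof (cases "hdot z (v' j) = 0")
      case True
      then show ?thesis using j R_pos m'_j by (simp add: logabs_def)
    next
      case False
      then have "z \<noteq> 0" by (auto simp: hdot_def)
      then obtain h where h: "eli v m z = ereal h" and "h \<le> 0"
        using eli_nonpos[OF ed small] eli_eq_minf_iff[OF ed] by (cases "eli v m z") auto
      have "cmod (hdot z (v' j)) \<le> exp (h / (R * m' j)) * K j"
        unfolding R_def K_def by (rule norm_hdot_le_cramer_bound[OF ed ed' le Q h \<open>h \<le> 0\<close>])
      then have "ln (cmod (hdot z (v' j))) \<le> h / (R * m' j) + ln (K j)"
        using False by (smt (verit) exp_gt_zero ln_exp ln_le_cancel_iff ln_mult zero_less_mult_pos
            zero_less_norm_iff)
      then have "R * m' j * ln (cmod (hdot z (v' j))) \<le> h + R * m' j * ln (K j)"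
        using R_pos m'_j by (simp add: field_simps)
      also have "\<dots> \<le> h + c"
      proof -
        have "R * m' j * ln (K j) \<le> \<bar>R * m' j * ln (K j)\<bar>"
          by simp
        also have "\<dots> \<le> c"
          unfolding c_def by (rule member_le_sum) auto
        finally show ?thesis by simp
      qed
      finally show ?thesis
        using j h False by (simp add: logabs_def)
    qed
  qed
  then show ?thesis
    unfolding R_def by blast
qed

lemma Liminf_le_cmult_Liminf:
  fixes f g :: "'a \<Rightarrow> ereal"
  assumes "F \<noteq> bot" and "R \<ge> 0"
    and "\<And>\<epsilon>. \<epsilon> > 0 \<Longrightarrow> eventually (\<lambda>x. f x \<le> ereal R * g x + ereal \<epsilon>) F"
  shows "Liminf F f \<le> ereal R * Liminf F g"
proof (rule ereal_le_epsilon2)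
  fix \<epsilon> :: real assume "\<epsilon> > 0"
  then have "Liminf F f \<le> Liminf F (\<lambda>x. ereal R * g x + ereal \<epsilon>)"
    by (intro Liminf_mono assms(3))
  also have "\<dots> = ereal R * Liminf F g + ereal \<epsilon>"
    using assms(1,2) by (simp add: Liminf_add_ereal_right Liminf_ereal_mult_left)
  finally show "Liminf F f \<le> ereal R * Liminf F g + ereal \<epsilon>" .
qed

lemma ereal_divide_neg_le_cmult:
  fixes x y :: ereal
  assumes "l < 0" and "R > 0" and "ereal R * y \<le> x + ereal c"
  shows "x / ereal l \<le> ereal R * (y / ereal l) + ereal (- c / l)"
  using assms by (cases x; cases y) (auto simp: field_simps)

lemma eventually_hdot_small:
  fixes w :: "'a \<Rightarrow> complex^'n::finite" and v :: "'i::finite \<Rightarrow> complex^'n"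
  assumes "(w \<longlongrightarrow> 0) F"
  shows "eventually (\<lambda>x. \<forall>i. cmod (hdot (w x) (v i)) \<le> 1) F"
proof (rule eventually_all_finite)
  fix i
  have "((\<lambda>x. \<Sum>j\<in>UNIV. w x $ j * cnj (v i $ j)) \<longlongrightarrow> (\<Sum>j\<in>UNIV. 0 $ j * cnj (v i $ j))) F"
    by (intro tendsto_intros assms)
  then have "((\<lambda>x. hdot (w x) (v i)) \<longlongrightarrow> 0) F"
    by (simp add: hdot_def)
  then have "eventually (\<lambda>x. dist (hdot (w x) (v i)) 0 < 1) F"
    using zero_less_one by (rule tendstoD)
  then show "eventually (\<lambda>x. cmod (hdot (w x) (v i)) \<le> 1) F"
    by eventually_elim simp
qed

lemma eventually_at_zero_norm_less:
  assumes "r > 0"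
  shows "eventually (\<lambda>\<zeta>::complex. \<zeta> \<noteq> 0 \<and> cmod \<zeta> < r) (at 0)"
  unfolding eventually_at using assms by (auto intro!: exI[where x=r])

lemma Liminf_eli_quotient_nonneg:
  fixes v :: "'n::finite \<Rightarrow> complex^'n" and w :: "complex \<Rightarrow> complex^'n"
  assumes "eli_data v m" and "(w \<longlongrightarrow> 0) (at 0)"
  shows "0 \<le> Liminf (at 0) (\<lambda>\<zeta>. eli v m (w \<zeta>) / ereal (ln (cmod \<zeta>)))"
proof (rule Liminf_bounded)
  show "eventually (\<lambda>\<zeta>. 0 \<le> eli v m (w \<zeta>) / ereal (ln (cmod \<zeta>))) (at 0)"
    using eventually_hdot_small[OF assms(2), of v] eventually_at_zero_norm_less[OF zero_less_one]
  proof eventually_elim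
    case (elim \<zeta>)
    then have "ln (cmod \<zeta>) < 0" and "eli v m (w \<zeta>) \<le> 0"
      using eli_nonpos[OF assms(1)] by auto
    then show ?case
      by (cases "eli v m (w \<zeta>)") (auto simp: divide_le_eq zero_le_divide_iff)
  qed
qed

lemma Liminf_eli_quotient_le:
  fixes v v' :: "'n::finite \<Rightarrow> complex^'n" and w :: "complex \<Rightarrow> complex^'n"
  assumes ed: "eli_data v m" and ed': "eli_data v' m'"
    and le: "\<forall>z\<in>polydisc. eli v m z \<le> eli v' m' z + ereal C"
    and w: "(w \<longlongrightarrow> 0) (at 0)"
  shows "Liminf (at 0) (\<lambda>\<zeta>. eli v m (w \<zeta>) / ereal (ln (cmod \<zeta>)))
         \<le> ereal (eli_tau m / eli_tau m') * Liminf (at 0) (\<lambda>\<zeta>. eli v' m' (w \<zeta>) / ereal (ln (cmod \<zeta>)))"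
proof (rule Liminf_le_cmult_Liminf)
  define R where "R = eli_tau m / eli_tau m'"
  have R_pos: "R > 0"
    unfolding R_def using ed ed' by (rule eli_tau_ratio_pos)
  then show "R \<ge> 0" by simp
  obtain c where c: "\<And>z. \<forall>i. cmod (hdot z (v i)) \<le> 1 \<Longrightarrow> ereal R * eli v' m' z \<le> eli v m z + ereal c"
    using eli_lower_bound[OF ed ed' le] unfolding R_def by blast
  fix \<epsilon> :: real assume "\<epsilon> > 0"
  (* The constant c costs -c / ln|zeta| in the quotient, which is below epsilon
     once |zeta| < exp(-|c|/epsilon). *)
  have "min 1 (exp (- \<bar>c\<bar> / \<epsilon>)) > 0" by simp
  show "eventually (\<lambda>\<zeta>. eli v m (w \<zeta>) / ereal (ln (cmod \<zeta>))
          \<le> ereal R * (eli v' m' (w \<zeta>) / ereal (ln (cmod \<zeta>))) + ereal \<epsilon>) (at 0)"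
    using eventually_hdot_small[OF w, of v]
      eventually_at_zero_norm_less[OF \<open>min 1 (exp (- \<bar>c\<bar> / \<epsilon>)) > 0\<close>]
  proof eventually_elim
    case (elim \<zeta>)
    then have log_neg: "ln (cmod \<zeta>) < 0" by simp
    have "ln (cmod \<zeta>) < - \<bar>c\<bar> / \<epsilon>"
      using elim by (metis exp_less_cancel_iff exp_ln min_less_iff_conj zero_less_norm_iff)
    then have "- c / ln (cmod \<zeta>) \<le> \<epsilon>"
      using log_neg \<open>\<epsilon> > 0\<close> by (simp add: field_simps)
    with ereal_divide_neg_le_cmult[OF log_neg R_pos c[OF elim(1)]] show ?case
      by (meson add_left_mono ereal_less_eq(3) order_trans)
  qed
qed simp

lemma isCont_if_holomorphic_components:
  fixes \<phi> :: "complex \<Rightarrow> complex^'n::finite"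
  assumes "\<forall>i. (\<lambda>z. \<phi> z $ i) holomorphic_on S" and "open S" and "\<alpha> \<in> S"
  shows "isCont \<phi> \<alpha>"
proof -
  have "continuous_on S (\<lambda>z. \<chi> i. \<phi> z $ i)"
    using assms(1) by (intro continuous_on_vec_lambda holomorphic_on_imp_continuous_on) blast
  then show ?thesis
    using assms(2,3) by (simp add: continuous_on_eq_continuous_at)
qed

lemma tendsto_shifted_difference:
  fixes \<phi> :: "'a::real_normed_vector \<Rightarrow> 'b::real_normed_vector"
  assumes "isCont \<phi> \<alpha>" and "\<phi> \<alpha> = a"
  shows "((\<lambda>\<zeta>. \<phi> (\<alpha> + \<zeta>) - a) \<longlongrightarrow> 0) (at 0)"
proof -
  have "((\<lambda>\<zeta>. \<phi> (\<alpha> + \<zeta>)) \<longlongrightarrow> a) (at 0)"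
    using assms LIM_offset_zero[where f=\<phi> and a=\<alpha> and L=a] unfolding isCont_def by simp
  then show ?thesis
    using tendsto_diff[OF _ tendsto_const[of a]] by fastforce
qed

lemma multiplicity_nonneg:
  fixes v :: "'n::finite \<Rightarrow> complex^'n"
  assumes "eli_data v m" and "isCont \<phi> \<alpha>"
  shows "0 \<le> mult \<phi> a v m \<alpha>"
proof (cases "\<phi> \<alpha> = a")
  case True
  then show ?thesis
    using Liminf_eli_quotient_nonneg[OF assms(1) tendsto_shifted_difference[OF assms(2) True]]
      eli_tau_pos[OF assms(1)]
    by (simp add: mult_def)
qed (simp add: mult_def)

lemma multiplicity_le_scaled:
  fixes v v' :: "'n::finite \<Rightarrow> complex^'n"
  assumes ed: "eli_data v m" and ed': "eli_data v' m'"
    and le: "\<forall>z\<in>polydisc. eli v m z \<le> eli v' m' z + ereal C"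
    and cont: "isCont \<phi> \<alpha>"
  shows "mult \<phi> a v m \<alpha> \<le> ereal (eli_tau m / eli_tau m') * mult \<phi> a v' m' \<alpha>"
proof (cases "\<phi> \<alpha> = a")
  case True
  define R where "R = eli_tau m / eli_tau m'"
  have R_pos: "R > 0"
    unfolding R_def using ed ed' by (rule eli_tau_ratio_pos)
  have tau: "eli_tau m = R * eli_tau m'"
    using eli_tau_pos[OF ed'] by (simp add: R_def)
  let ?L = "Liminf (at 0) (\<lambda>\<zeta>. eli v m (\<phi> (\<alpha> + \<zeta>) - a) / ereal (ln (cmod \<zeta>)))"
  let ?L' = "Liminf (at 0) (\<lambda>\<zeta>. eli v' m' (\<phi> (\<alpha> + \<zeta>) - a) / ereal (ln (cmod \<zeta>)))"
  have "?L \<le> ereal R * ?L'"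
    unfolding R_def by (rule Liminf_eli_quotient_le[OF ed ed' le tendsto_shifted_difference[OF cont True]])
  then have "min (ereal (eli_tau m)) ?L \<le> min (ereal R * ereal (eli_tau m')) (ereal R * ?L')"
    by (intro min.mono) (simp_all add: tau)
  also have "\<dots> = ereal R * min (ereal (eli_tau m')) ?L'"
    using R_pos by (simp add: min_def ereal_mult_le_mult_iff del: times_ereal.simps)
  finally show ?thesis
    using True by (simp add: mult_def R_def)
qed (simp add: mult_def)

lemma infsum_ereal_cmult_left:
  fixes f :: "'a \<Rightarrow> ereal"
  assumes "\<And>x. x \<in> A \<Longrightarrow> 0 \<le> f x"
  shows "(\<Sum>\<^sub>\<infinity>x\<in>A. ereal c * f x) = ereal c * (\<Sum>\<^sub>\<infinity>x\<in>A. f x)"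
proof -
  have "infsum ((\<lambda>y. ereal c * y) \<circ> f) A = ereal c * infsum f A"
  proof (rule infsum_comm_additive_general)
    show "sum ((\<lambda>y. ereal c * y) \<circ> f) F = ereal c * sum f F" if "finite F" "F \<subseteq> A" for F
      using assms that by (simp add: sum_ereal_right_distrib subset_iff)
    show "isCont (\<lambda>y. ereal c * y) (infsum f A)"
      unfolding isCont_def by (intro tendsto_cmult_ereal tendsto_ident_at) simp
    show "f summable_on A"
      using assms by (rule nonneg_summable_on_complete)
  qed
  then show ?thesis by (simp add: o_def)
qed

theorem lemma5p1:
  fixes \<Omega> :: "(complex^'n) set"
    and v v' :: "'n \<Rightarrow> complex^'n" and m m' :: "'n \<Rightarrow> real"
    and C :: real and A :: "complex set" and a :: "complex^'n"
    and \<phi> :: "complex \<Rightarrow> complex^'n"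
  assumes "open \<Omega>" and "connected \<Omega>" and "bounded \<Omega>"
    and "eli_data v m" and "eli_data v' m'"
    and "\<forall>z\<in>polydisc. eli v m z \<le> eli v' m' z + ereal C"
    and "eli_tau m' > 0"
    and "A \<subseteq> ball 0 1" and "a \<in> \<Omega>"
    and "\<forall>i. (\<lambda>z. \<phi> z $ i) holomorphic_on ball 0 1"
    and "\<phi> ` ball 0 1 \<subseteq> \<Omega>"
    and "(\<Sum>\<^sub>\<infinity>\<alpha>\<in>A. mult \<phi> a v' m' \<alpha>) \<le> ereal (eli_tau m')"
  shows "(\<Sum>\<^sub>\<infinity>\<alpha>\<in>A. mult \<phi> a v m \<alpha>) \<le> ereal (eli_tau m)"
proof -
  note ed = assms(4) and ed' = assms(5) and le = assms(6)
  define R where "R = eli_tau m / eli_tau m'"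
  have R_pos: "R > 0"
    unfolding R_def using ed ed' by (rule eli_tau_ratio_pos)
  have cont: "isCont \<phi> \<alpha>" if "\<alpha> \<in> A" for \<alpha>
    using isCont_if_holomorphic_components[OF assms(10) open_ball] assms(8) that by blast
  have "(\<Sum>\<^sub>\<infinity>\<alpha>\<in>A. mult \<phi> a v m \<alpha>) \<le> (\<Sum>\<^sub>\<infinity>\<alpha>\<in>A. ereal R * mult \<phi> a v' m' \<alpha>)"
  proof (rule infsum_mono)
    show "mult \<phi> a v m summable_on A"
      using multiplicity_nonneg[OF ed cont] by (rule nonneg_summable_on_complete)
    show "(\<lambda>\<alpha>. ereal R * mult \<phi> a v' m' \<alpha>) summable_on A"
      using multiplicity_nonneg[OF ed' cont] R_pos
      by (intro nonneg_summable_on_complete) simp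
    show "mult \<phi> a v m \<alpha> \<le> ereal R * mult \<phi> a v' m' \<alpha>" if "\<alpha> \<in> A" for \<alpha>
      unfolding R_def by (rule multiplicity_le_scaled[OF ed ed' le cont[OF that]])
  qed
  also have "\<dots> = ereal R * (\<Sum>\<^sub>\<infinity>\<alpha>\<in>A. mult \<phi> a v' m' \<alpha>)"
    using multiplicity_nonneg[OF ed' cont] by (rule infsum_ereal_cmult_left)
  also have "\<dots> \<le> ereal R * ereal (eli_tau m')"
    using assms(12) R_pos by (intro ereal_mult_left_mono) simp_all
  also have "\<dots> = ereal (eli_tau m)"
    using eli_tau_pos[OF ed'] by (simp add: R_def)
  finally show ?thesis .
qed

end
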